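(* Let $t<n/2$ and let $\nu\vdash 2n$ be a non-fat even partition. Then the trivial representation of $K=S_{2(n-t)}\times H_t$ does not occur in the restriction $S^\nu\downarrow^{S_{2n}}_K$.
   Context: $S^\nu$ is the irreducible representation of $S_{2n}$ indexed by $\nu\vdash 2n$. $K=S_{2(n-t)}\times H_t\le S_{2n}$, where $S_{2(n-t)}$ is the symmetric group on a fixed set of $2(n-t)$ points and $H_t\cong S_2\wr S_t$ is the stabilizer of a fixed perfect matching of the complementary $2t$ points. A partition $\nu\vdash 2n$ is even if $\nu=2\lambda=(2\lambda_1,2\lambda_2,\dots)$ for some $\lambda\vdash n$; it is fat if $\nu\ge 2(n-t,1^t)=(2(n-t),2,\dots,2)$ in reverse-lexicographic order ($\mu\le\lambda$ iff $\mu=\lambda$ or $\mu_j<\lambda_j$ at the first differing index $j$), and non-fat otherwise. *)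

theory Defs
  imports Complex_Main "HOL-Combinatorics.Permutations"
begin

definition is_partition :: "nat \<Rightarrow> nat list \<Rightarrow> bool" where
  "is_partition N p \<longleftrightarrow> sorted_wrt (\<ge>) p \<and> (\<forall>x\<in>set p. 0 < x) \<and> sum_list p = N"

definition part :: "nat list \<Rightarrow> nat \<Rightarrow> nat" where
  "part p j = (if j < length p then p ! j else 0)"

definition revlex_le :: "nat list \<Rightarrow> nat list \<Rightarrow> bool" where
  "revlex_le mu lam \<longleftrightarrow> mu = lam \<or>
     (\<exists>j. (\<forall>i<j. part mu i = part lam i) \<and> part mu j < part lam j)"

definition even_partition :: "nat \<Rightarrow> nat list \<Rightarrow> bool" where
  "even_partition n nu \<longleftrightarrow> (\<exists>lam. is_partition n lam \<and> nu = map (\<lambda>x. 2 * x) lam)"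

definition fat :: "nat \<Rightarrow> nat \<Rightarrow> nat list \<Rightarrow> bool" where
  "fat n t nu \<longleftrightarrow> revlex_le (2 * (n - t) # replicate t 2) nu"

definition cells :: "nat list \<Rightarrow> (nat \<times> nat) set" where
  "cells nu = {(i, j). i < length nu \<and> j < nu ! i}"

definition tableau :: "nat list \<Rightarrow> (nat \<times> nat \<Rightarrow> nat) \<Rightarrow> bool" where
  "tableau nu T \<longleftrightarrow> bij_betw T (cells nu) {0..<sum_list nu}"

text \<open>Tabloid of a tableau, represented as the row assignment of each point (0 off the diagram).\<close>
definition tabloid :: "nat list \<Rightarrow> (nat \<times> nat \<Rightarrow> nat) \<Rightarrow> (nat \<Rightarrow> nat)" where
  "tabloid nu T = (\<lambda>x. if x \<in> T ` cells nu then fst (the_inv_into (cells nu) T x) else 0)"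

definition colstab :: "nat list \<Rightarrow> (nat \<times> nat \<Rightarrow> nat) \<Rightarrow> (nat \<Rightarrow> nat) set" where
  "colstab nu T = {\<sigma>. \<sigma> permutes {0..<sum_list nu} \<and>
      (\<forall>c\<in>cells nu. snd (the_inv_into (cells nu) T (\<sigma> (T c))) = snd c)}"

text \<open>Vectors of the permutation module M^nu over the complex numbers are functions from
  tabloids to coefficients.  The polytabloid e_T = sum over sigma in C_T of sign(sigma) {sigma T}.\<close>
definition polytabloid :: "nat list \<Rightarrow> (nat \<times> nat \<Rightarrow> nat) \<Rightarrow> ((nat \<Rightarrow> nat) \<Rightarrow> complex)" where
  "polytabloid nu T = (\<lambda>g. \<Sum>\<sigma>\<in>colstab nu T.
      if tabloid nu (\<sigma> \<circ> T) = g then of_int (sign \<sigma>) else 0)"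

definition specht :: "nat list \<Rightarrow> ((nat \<Rightarrow> nat) \<Rightarrow> complex) set" where
  "specht nu = {v. \<exists>S c. finite S \<and> (\<forall>T\<in>S. tableau nu T) \<and>
      v = (\<lambda>g. \<Sum>T\<in>S. c T * polytabloid nu T g)}"

text \<open>Permutation action on M^nu: sigma {T} = {sigma \<circ> T}, i.e. (sigma v)(h) = v(h \<circ> sigma).\<close>
definition perm_act :: "(nat \<Rightarrow> nat) \<Rightarrow> ((nat \<Rightarrow> nat) \<Rightarrow> complex) \<Rightarrow> ((nat \<Rightarrow> nat) \<Rightarrow> complex)" where
  "perm_act \<sigma> v = (\<lambda>h. v (h \<circ> \<sigma>))"

text \<open>Partner of a point in the fixed perfect matching {2(n-t)+2k, 2(n-t)+2k+1} of {2(n-t)..<2n}.\<close>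
definition partner :: "nat \<Rightarrow> nat" where
  "partner x = (if even x then x + 1 else x - 1)"

text \<open>K = S_{2(n-t)} x H_t inside S_{2n} (acting on {0..<2n}).\<close>
definition young_K :: "nat \<Rightarrow> nat \<Rightarrow> (nat \<Rightarrow> nat) set" where
  "young_K n t = {\<sigma>. \<sigma> permutes {0..<2*n} \<and> \<sigma> ` {0..<2*(n-t)} = {0..<2*(n-t)} \<and>
      (\<forall>x\<in>{2*(n-t)..<2*n}. \<sigma> (partner x) = partner (\<sigma> x))}"

text \<open>The trivial representation of a subgroup K occurs in the restriction of S^nu to K iff
  S^nu has a nonzero K-fixed vector (Hom_K(1, Res V) = V^K).\<close>
definition trivial_occurs :: "nat list \<Rightarrow> (nat \<Rightarrow> nat) set \<Rightarrow> bool" where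
  "trivial_occurs nu K \<longleftrightarrow> (\<exists>v\<in>specht nu. v \<noteq> (\<lambda>_. 0) \<and> (\<forall>\<sigma>\<in>K. perm_act \<sigma> v = v))"

end

theory Submission
  imports Defs
begin

(* A vector of S^nu fixed by K is fixed by the whole symmetric group on A = {0..<2(n-t)},
   so its symmetrization over A is (2(n-t))! times itself.  For an even non-fat nu the first
   row is shorter than 2(n-t), so in every tableau two points of A share a column.  Their
   transposition multiplies the polytabloid by -1 but does not change the symmetrizer, so
   every polytabloid, and hence every vector of S^nu, has zero symmetrization. *)

lemma tableau_the_inv_into:
  assumes "tableau nu T" and "x \<in> {0..<sum_list nu}"
  shows "the_inv_into (cells nu) T x \<in> cells nu" and "T (the_inv_into (cells nu) T x) = x"
  using assms unfolding tableau_def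
  by (metis bij_betw_def the_inv_into_into order_refl, metis bij_betw_def f_the_inv_into_f_bij_betw)

lemma tableau_the_inv_into_apply:
  assumes "tableau nu T" and "c \<in> cells nu"
  shows "the_inv_into (cells nu) T (T c) = c"
  using assms unfolding tableau_def by (meson bij_betw_def the_inv_into_f_f)

lemma tableau_perm_comp:
  assumes "tableau nu U" and "\<rho> permutes {0..<sum_list nu}"
  shows "tableau nu (\<rho> \<circ> U)"
  using assms unfolding tableau_def by (meson bij_betw_trans permutes_imp_bij)

lemma tabloid_perm_comp:
  assumes U: "tableau nu U" and \<rho>: "\<rho> permutes {0..<sum_list nu}"
  shows "tabloid nu (\<rho> \<circ> U) \<circ> \<rho> = tabloid nu U"
proof
  fix y
  have image: "U ` cells nu = {0..<sum_list nu}" "(\<rho> \<circ> U) ` cells nu = {0..<sum_list nu}"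
    using U tableau_perm_comp[OF U \<rho>] unfolding tableau_def bij_betw_def by simp_all
  show "(tabloid nu (\<rho> \<circ> U) \<circ> \<rho>) y = tabloid nu U y"
  proof (cases "y \<in> {0..<sum_list nu}")
    case True
    define c where "c = the_inv_into (cells nu) U y"
    have c: "c \<in> cells nu" "U c = y"
      using tableau_the_inv_into[OF U True] unfolding c_def by simp_all
    have "the_inv_into (cells nu) (\<rho> \<circ> U) (\<rho> y) = c"
      using tableau_the_inv_into_apply[OF tableau_perm_comp[OF U \<rho>] c(1)] c(2) by simp
    then show ?thesis
      unfolding tabloid_def using image True permutes_in_image[OF \<rho>] c_def by simp
  next
    case False
    then show ?thesis
      unfolding tabloid_def using image permutes_not_in[OF \<rho>] by simp
  qed
qed

definition tableau_col :: "nat list \<Rightarrow> (nat \<times> nat \<Rightarrow> nat) \<Rightarrow> nat \<Rightarrow> nat" where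
  "tableau_col nu T x = snd (the_inv_into (cells nu) T x)"

lemma colstab_iff:
  assumes T: "tableau nu T"
  shows "\<sigma> \<in> colstab nu T \<longleftrightarrow> \<sigma> permutes {0..<sum_list nu} \<and>
    (\<forall>x\<in>{0..<sum_list nu}. tableau_col nu T (\<sigma> x) = tableau_col nu T x)"
proof -
  have image: "T ` cells nu = {0..<sum_list nu}" using T unfolding tableau_def bij_betw_def by simp
  have "tableau_col nu T (T c) = snd c" if "c \<in> cells nu" for c
    unfolding tableau_col_def using tableau_the_inv_into_apply[OF T that] by simp
  then have "(\<forall>c\<in>cells nu. tableau_col nu T (\<sigma> (T c)) = snd c) \<longleftrightarrow>
      (\<forall>x\<in>T ` cells nu. tableau_col nu T (\<sigma> x) = tableau_col nu T x)"
    by auto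
  then show ?thesis unfolding colstab_def image by (simp add: tableau_col_def)
qed

lemma colstab_compose:
  assumes "tableau nu T" and "\<sigma> \<in> colstab nu T" and "\<rho> \<in> colstab nu T"
  shows "\<sigma> \<circ> \<rho> \<in> colstab nu T"
  using assms permutes_in_image by (fastforce simp: colstab_iff permutes_compose)

lemma colstab_inv:
  assumes "tableau nu T" and "\<sigma> \<in> colstab nu T"
  shows "inv \<sigma> \<in> colstab nu T"
proof -
  have \<sigma>: "\<sigma> permutes {0..<sum_list nu}" using assms by (simp add: colstab_iff)
  have "tableau_col nu T (inv \<sigma> x) = tableau_col nu T x" if "x \<in> {0..<sum_list nu}" for x
    using assms that permutes_inverses(1)[OF \<sigma>, of x]
      permutes_in_image[OF permutes_inv[OF \<sigma>], of x] by (metis colstab_iff)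
  then show ?thesis using assms permutes_inv[OF \<sigma>] by (simp add: colstab_iff)
qed

lemma transpose_in_colstab:
  assumes "tableau nu T" and "a \<in> {0..<sum_list nu}" and "b \<in> {0..<sum_list nu}"
    and "tableau_col nu T a = tableau_col nu T b"
  shows "transpose a b \<in> colstab nu T"
  using assms by (auto simp: colstab_iff permutes_swap_id transpose_def)

lemma bij_betw_compose_colstab:
  assumes "tableau nu T" and "\<sigma> \<in> colstab nu T"
  shows "bij_betw ((\<circ>) \<sigma>) (colstab nu T) (colstab nu T)"
proof (rule bij_betw_byWitness[where f' = "(\<circ>) (inv \<sigma>)"])
  have "\<sigma> permutes {0..<sum_list nu}" using assms by (simp add: colstab_iff)
  then show "\<forall>\<rho>\<in>colstab nu T. inv \<sigma> \<circ> (\<sigma> \<circ> \<rho>) = \<rho>" "\<forall>\<rho>\<in>colstab nu T. \<sigma> \<circ> (inv \<sigma> \<circ> \<rho>) = \<rho>"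
    by (simp_all add: o_assoc permutes_inv_o)
qed (use assms colstab_compose colstab_inv in blast)+

lemma perm_act_polytabloid_colstab:
  assumes T: "tableau nu T" and \<sigma>: "\<sigma> \<in> colstab nu T"
  shows "perm_act \<sigma> (polytabloid nu T) = (\<lambda>g. of_int (sign \<sigma>) * polytabloid nu T g)"
proof
  fix g
  let ?C = "colstab nu T"
  let ?term = "\<lambda>\<rho>. if tabloid nu (\<rho> \<circ> T) = g then of_int (sign \<rho>) else (0::complex)"
  have \<sigma>_perm: "\<sigma> permutes {0..<sum_list nu}" using T \<sigma> by (simp add: colstab_iff)
  have summand: "(if tabloid nu (\<rho> \<circ> T) = g \<circ> \<sigma> then of_int (sign \<rho>) else 0)
      = of_int (sign \<sigma>) * ?term (\<sigma> \<circ> \<rho>)" if \<rho>: "\<rho> \<in> ?C" for \<rho>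
  proof -
    have \<rho>_perm: "\<rho> permutes {0..<sum_list nu}" using T \<rho> by (simp add: colstab_iff)
    have "tabloid nu (\<rho> \<circ> T) = g \<circ> \<sigma> \<longleftrightarrow> tabloid nu (\<sigma> \<circ> \<rho> \<circ> T) \<circ> \<sigma> = g \<circ> \<sigma>"
      using tabloid_perm_comp[OF tableau_perm_comp[OF T \<rho>_perm] \<sigma>_perm] by (simp add: o_assoc)
    also have "\<dots> \<longleftrightarrow> tabloid nu (\<sigma> \<circ> \<rho> \<circ> T) = g"
      using permutes_surj[OF \<sigma>_perm] by (metis surj_fun_eq UNIV_I)
    finally have tabloid_iff: "tabloid nu (\<rho> \<circ> T) = g \<circ> \<sigma> \<longleftrightarrow> tabloid nu (\<sigma> \<circ> \<rho> \<circ> T) = g" .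
    have "sign (\<sigma> \<circ> \<rho>) = sign \<sigma> * sign \<rho>"
      using \<sigma>_perm \<rho>_perm by (meson sign_compose finite_atLeastLessThan permutation_permutes)
    then have "sign \<rho> = sign \<sigma> * sign (\<sigma> \<circ> \<rho>)" by simp
    then show ?thesis using tabloid_iff by (simp add: o_assoc)
  qed
  have "perm_act \<sigma> (polytabloid nu T) g = (\<Sum>\<rho>\<in>?C. of_int (sign \<sigma>) * ?term (\<sigma> \<circ> \<rho>))"
    unfolding perm_act_def polytabloid_def using summand by (rule sum.cong[OF refl])
  also have "\<dots> = of_int (sign \<sigma>) * (\<Sum>\<rho>\<in>?C. ?term \<rho>)"
    unfolding sum_distrib_left[symmetric]
    using sum.reindex_bij_betw[OF bij_betw_compose_colstab[OF T \<sigma>], of ?term] by simp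
  finally show "perm_act \<sigma> (polytabloid nu T) g = of_int (sign \<sigma>) * polytabloid nu T g"
    unfolding polytabloid_def .
qed

definition symmetrize :: "nat set \<Rightarrow> ((nat \<Rightarrow> nat) \<Rightarrow> complex) \<Rightarrow> ((nat \<Rightarrow> nat) \<Rightarrow> complex)" where
  "symmetrize A v = (\<lambda>h. \<Sum>\<pi>\<in>{\<pi>. \<pi> permutes A}. perm_act \<pi> v h)"

lemma symmetrize_perm_act:
  assumes "\<tau> permutes A"
  shows "symmetrize A (perm_act \<tau> v) = symmetrize A v"
proof
  fix h
  have "symmetrize A (perm_act \<tau> v) h = (\<Sum>\<pi>\<in>{\<pi>. \<pi> permutes A}. perm_act (\<pi> \<circ> \<tau>) v h)"
    unfolding symmetrize_def perm_act_def by (simp add: o_assoc)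
  also have "\<dots> = symmetrize A v h"
    unfolding symmetrize_def
    by (rule sum_permutations_compose_right[OF assms, of "\<lambda>\<pi>. perm_act \<pi> v h", symmetric])
  finally show "symmetrize A (perm_act \<tau> v) h = symmetrize A v h" .
qed

lemma symmetrize_invariant:
  assumes "finite A" and "\<And>\<pi>. \<pi> permutes A \<Longrightarrow> perm_act \<pi> v = v"
  shows "symmetrize A v = (\<lambda>h. fact (card A) * v h)"
proof
  fix h
  have "symmetrize A v h = (\<Sum>\<pi>\<in>{\<pi>. \<pi> permutes A}. v h)"
    unfolding symmetrize_def using assms(2) by (intro sum.cong) auto
  then show "symmetrize A v h = fact (card A) * v h"
    using card_permutations[OF refl assms(1)] by simp
qed

lemma symmetrize_polytabloid_eq_0:
  assumes T: "tableau nu T" and A: "A \<subseteq> {0..<sum_list nu}"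
    and ab: "a \<in> A" "b \<in> A" "a \<noteq> b" and col: "tableau_col nu T a = tableau_col nu T b"
  shows "symmetrize A (polytabloid nu T) = (\<lambda>_. 0)"
proof
  fix h
  let ?e = "polytabloid nu T"
  have "transpose a b \<in> colstab nu T"
    using transpose_in_colstab[OF T _ _ col] ab A by blast
  then have "perm_act (transpose a b) ?e = (\<lambda>g. of_int (sign (transpose a b)) * ?e g)"
    by (rule perm_act_polytabloid_colstab[OF T])
  also have "\<dots> = (\<lambda>g. - ?e g)" using ab(3) by (simp add: sign_swap_id)
  finally have "perm_act (transpose a b) ?e = (\<lambda>g. - ?e g)" .
  then have "symmetrize A ?e h = symmetrize A (\<lambda>g. - ?e g) h"
    using symmetrize_perm_act[OF permutes_swap_id[OF ab(1,2)]] by metis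
  also have "\<dots> = - symmetrize A ?e h"
    unfolding symmetrize_def perm_act_def by (simp add: sum_negf)
  finally show "symmetrize A ?e h = 0" by simp
qed

lemma tableau_col_less_hd:
  assumes nu: "is_partition N nu" and T: "tableau nu T" and x: "x \<in> {0..<sum_list nu}"
  shows "tableau_col nu T x < hd nu"
proof -
  obtain i j where ij: "the_inv_into (cells nu) T x = (i, j)" "i < length nu" "j < nu ! i"
    using tableau_the_inv_into(1)[OF T x] unfolding cells_def by auto
  have "nu ! i \<le> nu ! 0"
    using nu ij(2) sorted_wrt_nth_less[of "(\<ge>)" nu 0 i] unfolding is_partition_def
    by (cases "i = 0") auto
  moreover have "nu \<noteq> []" using ij(2) by auto
  ultimately show ?thesis using ij by (simp add: tableau_col_def hd_conv_nth)
qed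

lemma tableau_col_collision:
  assumes nu: "is_partition N nu" and T: "tableau nu T" and A: "A \<subseteq> {0..<sum_list nu}"
    and card: "hd nu < card A"
  obtains a b where "a \<in> A" "b \<in> A" "a \<noteq> b" "tableau_col nu T a = tableau_col nu T b"
proof -
  have "tableau_col nu T ` A \<subseteq> {0..<hd nu}"
    using tableau_col_less_hd[OF nu T] A by auto
  then have "card (tableau_col nu T ` A) < card A"
    using card by (metis card_atLeastLessThan card_mono finite_atLeastLessThan diff_zero le_less_trans)
  then have "\<not> inj_on (tableau_col nu T) A" by (rule pigeonhole)
  then show ?thesis using that unfolding inj_on_def by blast
qed

lemma symmetrize_specht_eq_0:
  assumes nu: "is_partition N nu" and A: "A \<subseteq> {0..<sum_list nu}" and card: "hd nu < card A"
    and v: "v \<in> specht nu"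
  shows "symmetrize A v = (\<lambda>_. 0)"
proof
  fix h
  obtain S c where S: "\<forall>T\<in>S. tableau nu T" and v_eq: "v = (\<lambda>g. \<Sum>T\<in>S. c T * polytabloid nu T g)"
    using v unfolding specht_def by blast
  have zero: "symmetrize A (polytabloid nu T) h = 0" if "T \<in> S" for T
  proof -
    from that S have T: "tableau nu T" by blast
    obtain a b where "a \<in> A" "b \<in> A" "a \<noteq> b" "tableau_col nu T a = tableau_col nu T b"
      using tableau_col_collision[OF nu T A card] .
    then show ?thesis using symmetrize_polytabloid_eq_0[OF T A] by metis
  qed
  have "symmetrize A v h = (\<Sum>T\<in>S. c T * symmetrize A (polytabloid nu T) h)"
    unfolding v_eq symmetrize_def perm_act_def
    by (subst sum.swap) (simp add: sum_distrib_left)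
  then show "symmetrize A v h = 0" using zero by simp
qed

lemma part_Cons_Suc [simp]: "part (a # xs) (Suc j) = part xs j"
  by (simp add: part_def)

lemma revlex_le_Cons:
  assumes "revlex_le xs ys"
  shows "revlex_le (a # xs) (a # ys)"
  using assms unfolding revlex_le_def
proof (elim disjE exE conjE)
  fix j assume eq: "\<forall>i<j. part xs i = part ys i" and less: "part xs j < part ys j"
  have "\<forall>i<Suc j. part (a # xs) i = part (a # ys) i"
    using eq by (auto simp: part_def less_Suc_eq_0_disj)
  moreover have "part (a # xs) (Suc j) < part (a # ys) (Suc j)"
    using less by simp
  ultimately show "a # xs = a # ys \<or> (\<exists>j. (\<forall>i<j. part (a # xs) i = part (a # ys) i) \<and>
      part (a # xs) j < part (a # ys) j)" by blast
qed simp

lemma revlex_le_replicate_2: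
  assumes "\<forall>x\<in>set r. even x \<and> 0 < x" and "sum_list r = 2 * t"
  shows "revlex_le (replicate t 2) r"
  using assms
proof (induction r arbitrary: t)
  case Nil
  then show ?case by (simp add: revlex_le_def)
next
  case (Cons x r)
  then obtain s where t: "t = Suc s" by (cases t) auto
  show ?case
  proof (cases "x = 2")
    case True
    then have "revlex_le (replicate s 2) r" using Cons t by simp
    then show ?thesis using True t by (simp add: revlex_le_Cons)
  next
    case False
    then have "2 < x" using Cons.prems(1) by auto
    then have "part (replicate t 2) 0 < part (x # r) 0" using t by (simp add: part_def)
    then show ?thesis unfolding revlex_le_def by blast
  qed
qed

lemma hd_less_if_not_fat:
  assumes nu: "is_partition (2 * n) nu" and even: "\<forall>x\<in>set nu. even x" and "nu \<noteq> []"
    and not_fat: "\<not> fat n t nu"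
  shows "hd nu < 2 * (n - t)"
proof (rule ccontr)
  assume "\<not> ?thesis"
  obtain x r where nu_eq: "nu = x # r" using \<open>nu \<noteq> []\<close> by (cases nu) auto
  with \<open>\<not> ?thesis\<close> consider "2 * (n - t) < x" | "x = 2 * (n - t)" by fastforce
  then have "fat n t nu"
  proof cases
    case 1
    then have "part (2 * (n - t) # replicate t 2) 0 < part nu 0" using nu_eq by (simp add: part_def)
    then show ?thesis unfolding fat_def revlex_le_def by blast
  next
    case 2
    have "0 < x" "\<forall>y\<in>set r. even y \<and> 0 < y" "x + sum_list r = 2 * n"
      using nu even unfolding nu_eq is_partition_def by auto
    then have "sum_list r = 2 * t" using 2 by linarith
    then show ?thesis
      unfolding fat_def nu_eq 2 using revlex_le_Cons revlex_le_replicate_2 \<open>\<forall>y\<in>set r. _\<close> by blast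
  qed
  with not_fat show False ..
qed

lemma even_partition_even_parts:
  assumes "even_partition n nu"
  shows "\<forall>x\<in>set nu. even x"
  using assms unfolding even_partition_def by auto

lemma permutes_in_young_K:
  assumes \<pi>: "\<pi> permutes {0..<2 * (n - t)}"
  shows "\<pi> \<in> young_K n t"
proof -
  have "\<pi> (partner x) = partner (\<pi> x)" if x: "x \<in> {2 * (n - t)..<2 * n}" for x
  proof -
    have "x \<notin> {0..<2 * (n - t)}" using x by simp
    moreover have "partner x \<notin> {0..<2 * (n - t)}"
      using x by (auto simp: partner_def) presburger
    ultimately show ?thesis using \<pi> by (simp add: permutes_not_in)
  qed
  moreover have "\<pi> permutes {0..<2 * n}" using \<pi> by (rule permutes_subset) auto
  ultimately show ?thesis unfolding young_K_def using permutes_image[OF \<pi>] by blast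
qed

theorem mainTheorem16:
  fixes n t :: nat and nu :: "nat list"
  assumes "2 * t < n"
    and "is_partition (2 * n) nu"
    and "even_partition n nu"
    and "\<not> fat n t nu"
  shows "\<not> trivial_occurs nu (young_K n t)"
proof
  assume "trivial_occurs nu (young_K n t)"
  then obtain v where v: "v \<in> specht nu" "v \<noteq> (\<lambda>_. 0)"
    and fixed: "\<forall>\<sigma>\<in>young_K n t. perm_act \<sigma> v = v"
    unfolding trivial_occurs_def by blast
  define A where "A = {0..<2 * (n - t)}"
  have size: "sum_list nu = 2 * n" using assms(2) by (simp add: is_partition_def)
  then have "nu \<noteq> []" using assms(1) by auto
  then have "hd nu < card A"
    using hd_less_if_not_fat[OF assms(2) even_partition_even_parts[OF assms(3)] _ assms(4)]
    by (simp add: A_def)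
  moreover have "A \<subseteq> {0..<sum_list nu}" using size by (auto simp: A_def)
  ultimately have "symmetrize A v = (\<lambda>_. 0)"
    using symmetrize_specht_eq_0[OF assms(2) _ _ v(1)] by blast
  moreover have "symmetrize A v = (\<lambda>h. fact (card A) * v h)"
    using fixed permutes_in_young_K by (intro symmetrize_invariant) (auto simp: A_def)
  ultimately show False using v(2) by (auto simp: fun_eq_iff)
qed

end
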